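(* Let $M\in\mathbb{R}_+^{m\times n}$ be a matrix with nonnegative entries and let $k\ge 1$ be an integer. Consider the problem $$\min_{U\in\mathbb{R}_+^{m\times k},\,V\in\mathbb{R}_+^{n\times k}}\ \left\|M-UV^\top\right\|_F .$$ If an optimal solution to this problem exists, then there exists at least one global optimal solution $(U,V)$ satisfying $$U_{i,l}\le \sqrt{2\|M\|_F}\quad\text{and}\quad V_{j,l}\le\sqrt{2\|M\|_F}\qquad\text{for all } i\in\{1,\dots,m\},\ j\in\{1,\dots,n\},\ l\in\{1,\dots,k\}.$$
   Context: $\mathbb{R}_+^{p\times q}$ denotes the set of $p\times q$ real matrices with nonnegative entries; $\|X\|_F=(\sum_{ij}X_{ij}^2)^{1/2}$ is the Frobenius norm; $U_{i,l}$ denotes the $(i,l)$ entry of $U$. *)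

theory Defs
  imports "HOL-Analysis.Analysis"
begin

definition frob :: "real^'n^'m \<Rightarrow> real" where
  "frob X = sqrt (\<Sum>i\<in>UNIV. \<Sum>j\<in>UNIV. (X $ i $ j)^2)"

definition nonneg_mat :: "real^'n^'m \<Rightarrow> bool" where
  "nonneg_mat X \<longleftrightarrow> (\<forall>i j. X $ i $ j \<ge> 0)"

definition nmf_obj :: "real^'n^'m \<Rightarrow> real^'k^'m \<Rightarrow> real^'k^'n \<Rightarrow> real" where
  "nmf_obj M U V = frob (M - U ** transpose V)"

definition nmf_optimal :: "real^'n^'m \<Rightarrow> real^'k^'m \<Rightarrow> real^'k^'n \<Rightarrow> bool" where
  "nmf_optimal M U V \<longleftrightarrow> nonneg_mat U \<and> nonneg_mat V \<and>
     (\<forall>U' V'. nonneg_mat (U'::real^'k^'m) \<and> nonneg_mat (V'::real^'k^'n) \<longrightarrow>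
        nmf_obj M U V \<le> nmf_obj M U' V')"

end

theory Submission
  imports Defs
begin

text \<open>
  If \<open>(U, V)\<close> is optimal, comparing with \<open>(0, V)\<close> gives \<open>\<parallel>M - U V\<^sup>T\<parallel> \<le> \<parallel>M\<parallel>\<close>, hence
  \<open>\<parallel>U V\<^sup>T\<parallel> \<le> 2 \<parallel>M\<parallel>\<close>. By nonnegativity every rank-one contribution \<open>U\<^sub>i\<^sub>l V\<^sub>j\<^sub>l\<close> is at
  most the entry \<open>(U V\<^sup>T)\<^sub>i\<^sub>j\<close>, so the column maxima \<open>p\<^sub>l\<close> of \<open>U\<close> and \<open>q\<^sub>l\<close> of \<open>V\<close> satisfy
  \<open>p\<^sub>l q\<^sub>l \<le> 2 \<parallel>M\<parallel>\<close>. Scaling column \<open>l\<close> of \<open>U\<close> by \<open>\<surd>(q\<^sub>l/p\<^sub>l)\<close> and of \<open>V\<close> by the reciprocal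
  keeps \<open>U V\<^sup>T\<close>, hence optimality, and makes both maxima \<open>\<surd>(p\<^sub>l q\<^sub>l)\<close> (if \<open>p\<^sub>l q\<^sub>l = 0\<close>,
  both columns can be zeroed instead).
\<close>

lemma frob_eq_norm: "frob (X::real^'n^'m) = norm X"
proof -
  have "\<And>i. (norm (X$i))\<^sup>2 = (\<Sum>j\<in>UNIV. (X$i$j)\<^sup>2)"
    by (simp add: norm_vec_def L2_set_def sum_nonneg)
  then show ?thesis
    by (simp add: frob_def norm_vec_def L2_set_def)
qed

lemma entry_le_frob: "X $ i $ j \<le> frob (X::real^'n^'m)"
proof -
  have "X$i$j \<le> norm (X$i)"
    using component_le_norm_cart[of "X$i" j] by linarith
  also have "\<dots> \<le> norm X"
    by (rule Finite_Cartesian_Product.norm_nth_le)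
  finally show ?thesis
    by (simp add: frob_eq_norm)
qed

lemma matrix_mult_transpose_nth:
  fixes U :: "real^'k^'m" and V :: "real^'k^'n"
  shows "(U ** transpose V) $ i $ j = (\<Sum>l\<in>UNIV. U$i$l * V$j$l)"
  by (simp add: matrix_matrix_mult_def transpose_def)

lemma nonneg_rank_one_term_le_frob:
  fixes U :: "real^'k^'m" and V :: "real^'k^'n"
  assumes "nonneg_mat U" "nonneg_mat V"
  shows "U$i$l * V$j$l \<le> frob (U ** transpose V)"
proof -
  have "U$i$l * V$j$l \<le> (\<Sum>l'\<in>UNIV. U$i$l' * V$j$l')"
    using assms by (intro member_le_sum) (auto simp: nonneg_mat_def)
  also have "\<dots> = (U ** transpose V) $ i $ j"
    by (simp add: matrix_mult_transpose_nth)
  also have "\<dots> \<le> frob (U ** transpose V)"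
    by (rule entry_le_frob)
  finally show ?thesis .
qed

lemma nmf_optimal_frob_product_le:
  assumes "nmf_optimal M U V"
  shows "frob (U ** transpose V) \<le> 2 * frob M"
proof -
  have "nmf_obj M U V \<le> nmf_obj M 0 V"
    using assms by (simp add: nmf_optimal_def nonneg_mat_def)
  then have "norm (M - U ** transpose V) \<le> norm M"
    by (simp add: nmf_obj_def frob_eq_norm)
  then show ?thesis
    using norm_triangle_ineq4[of M "M - U ** transpose V"] by (simp add: frob_eq_norm)
qed

lemma nmf_optimal_same_product:
  fixes U U' :: "real^'k^'m" and V V' :: "real^'k^'n"
  assumes "nmf_optimal M U V" "nonneg_mat U'" "nonneg_mat V'"
    and "U' ** transpose V' = U ** transpose V"
  shows "nmf_optimal M U' V'"
  using assms unfolding nmf_optimal_def nmf_obj_def by simp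

lemma sqrt_div_mult_self:
  assumes "p > 0"
  shows "sqrt (q / p) * p = sqrt (p * q)"
proof -
  have "sqrt (p * q) = sqrt (q / p) * sqrt (p\<^sup>2)"
    unfolding real_sqrt_mult[symmetric] using assms by (simp add: power2_eq_square)
  then show ?thesis
    using assms by simp
qed

lemma balance_rank_one:
  fixes u :: "'m::finite \<Rightarrow> real" and v :: "'n::finite \<Rightarrow> real"
  assumes u_nonneg: "\<And>i. u i \<ge> 0" and v_nonneg: "\<And>j. v j \<ge> 0"
    and bound: "\<And>i j. u i * v j \<le> b"
  obtains c d :: real where "c \<ge> 0" "d \<ge> 0" "\<And>i j. c * u i * (d * v j) = u i * v j"
    "\<And>i. c * u i \<le> sqrt b" "\<And>j. d * v j \<le> sqrt b"
proof -
  define p where "p = Max (range u)"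
  define q where "q = Max (range v)"
  have u_le: "u i \<le> p" and v_le: "v j \<le> q" for i j
    by (simp_all add: p_def q_def)
  obtain i0 j0 where "u i0 = p" "v j0 = q"
  proof -
    have "p \<in> range u" "q \<in> range v"
      unfolding p_def q_def by (intro Max_in; simp)+
    then show thesis
      using that by blast
  qed
  then have "p * q \<le> b" "p \<ge> 0" "q \<ge> 0"
    using bound[of i0 j0] u_nonneg[of i0] v_nonneg[of j0] by simp_all
  show thesis
  proof (cases "p * q = 0")
    case True
    have "u i * v j \<le> p * q" for i j
      using u_le v_le v_nonneg \<open>p \<ge> 0\<close> by (intro mult_mono)
    then have "u i * v j = 0" for i j
      using True u_nonneg v_nonneg by (metis antisym mult_nonneg_nonneg)
    moreover have "b \<ge> 0"
      using \<open>p * q \<le> b\<close> True by simp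
    ultimately show thesis
      by (intro that[of 0 0]) auto
  next
    case False
    with \<open>p \<ge> 0\<close> \<open>q \<ge> 0\<close> have "p > 0" "q > 0"
      by auto
    define c where "c = sqrt (q / p)"
    define d where "d = sqrt (p / q)"
    have "c * d = 1"
      using \<open>p > 0\<close> \<open>q > 0\<close> by (simp add: c_def d_def real_sqrt_mult[symmetric])
    have "c * p = sqrt (p * q)" "d * q = sqrt (p * q)"
      using \<open>p > 0\<close> \<open>q > 0\<close> by (simp_all add: c_def d_def sqrt_div_mult_self mult.commute[of p q])
    moreover have "sqrt (p * q) \<le> sqrt b"
      using \<open>p * q \<le> b\<close> by simp
    moreover have "c \<ge> 0" "d \<ge> 0"
      using \<open>p > 0\<close> \<open>q > 0\<close> by (simp_all add: c_def d_def)
    ultimately show thesis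
    proof (intro that)
      show "c * u i * (d * v j) = u i * v j" for i j
        using \<open>c * d = 1\<close> by (simp add: algebra_simps)
      show "c * u i \<le> sqrt b" for i
        using mult_left_mono[OF u_le[of i] \<open>c \<ge> 0\<close>] \<open>c * p = sqrt (p * q)\<close>
          \<open>sqrt (p * q) \<le> sqrt b\<close> by linarith
      show "d * v j \<le> sqrt b" for j
        using mult_left_mono[OF v_le[of j] \<open>d \<ge> 0\<close>] \<open>d * q = sqrt (p * q)\<close>
          \<open>sqrt (p * q) \<le> sqrt b\<close> by linarith
    qed
  qed
qed

lemma nonneg_factorization_balanced:
  fixes U :: "real^'k^'m" and V :: "real^'k^'n"
  assumes "nonneg_mat U" "nonneg_mat V" and "\<And>i j l. U$i$l * V$j$l \<le> b"
  obtains U' :: "real^'k^'m" and V' :: "real^'k^'n"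
  where "nonneg_mat U'" "nonneg_mat V'" "U' ** transpose V' = U ** transpose V"
    "\<And>i l. U'$i$l \<le> sqrt b" "\<And>j l. V'$j$l \<le> sqrt b"
proof -
  have "\<forall>l. \<exists>c d. c \<ge> 0 \<and> d \<ge> 0 \<and> (\<forall>i j. c * U$i$l * (d * V$j$l) = U$i$l * V$j$l) \<and>
      (\<forall>i. c * U$i$l \<le> sqrt b) \<and> (\<forall>j. d * V$j$l \<le> sqrt b)"
    (is "\<forall>l. \<exists>c d. ?balances l c d")
  proof
    fix l
    obtain c d where "c \<ge> 0" "d \<ge> 0" "\<And>i j. c * U$i$l * (d * V$j$l) = U$i$l * V$j$l"
      "\<And>i. c * U$i$l \<le> sqrt b" "\<And>j. d * V$j$l \<le> sqrt b"
      using balance_rank_one[of "\<lambda>i. U$i$l" "\<lambda>j. V$j$l" b] assms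
      by (auto simp: nonneg_mat_def)
    then show "\<exists>c d. ?balances l c d"
      by blast
  qed
  then obtain c d :: "'k \<Rightarrow> real" where scale: "\<And>l. c l \<ge> 0" "\<And>l. d l \<ge> 0"
    "\<And>i j l. c l * U$i$l * (d l * V$j$l) = U$i$l * V$j$l"
    "\<And>i l. c l * U$i$l \<le> sqrt b" "\<And>j l. d l * V$j$l \<le> sqrt b"
    by metis
  show thesis
  proof (rule that)
    show "nonneg_mat (\<chi> i l. c l * U$i$l)" "nonneg_mat (\<chi> j l. d l * V$j$l)"
      using assms(1,2) scale(1,2) by (simp_all add: nonneg_mat_def)
    show "(\<chi> i l. c l * U$i$l) ** transpose (\<chi> j l. d l * V$j$l) = U ** transpose V"
      by (simp add: vec_eq_iff matrix_mult_transpose_nth scale(3))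
  qed (simp_all add: scale(4,5))
qed

theorem lemma1:
  fixes M :: "real^'n^'m"
  assumes "nonneg_mat M"
    and "\<exists>U0 :: real^'k^'m. \<exists>V0 :: real^'k^'n. nmf_optimal M U0 V0"
  shows "\<exists>U :: real^'k^'m. \<exists>V :: real^'k^'n. nmf_optimal M U V \<and>
           (\<forall>i l. U $ i $ l \<le> sqrt (2 * frob M)) \<and>
           (\<forall>j l. V $ j $ l \<le> sqrt (2 * frob M))"
proof -
  obtain U0 :: "real^'k^'m" and V0 :: "real^'k^'n" where opt: "nmf_optimal M U0 V0"
    using assms(2) by blast
  then have nonneg: "nonneg_mat U0" "nonneg_mat V0"
    by (simp_all add: nmf_optimal_def)
  have "U0$i$l * V0$j$l \<le> 2 * frob M" for i j l
    using nonneg_rank_one_term_le_frob[OF nonneg] nmf_optimal_frob_product_le[OF opt]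
    by (rule order_trans)
  then obtain U :: "real^'k^'m" and V :: "real^'k^'n"
    where "nonneg_mat U" "nonneg_mat V" "U ** transpose V = U0 ** transpose V0"
      "\<And>i l. U$i$l \<le> sqrt (2 * frob M)" "\<And>j l. V$j$l \<le> sqrt (2 * frob M)"
    using nonneg_factorization_balanced[OF nonneg] by metis
  then show ?thesis
    using nmf_optimal_same_product[OF opt] by blast
qed

end
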